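(* A (Tychonoff) space $X$ is a finite $C$-space if and only if for any sequence $\{Q_n\}$ of finite-dimensional cubes and closed nowhere dense sets $A_n\subset Q_n$, every sequence of continuous maps $f_n\colon X\to Q_n$ is finitely removable from $A=\prod_{n=1}^\infty A_n$, i.e. for every sequence of positive reals $\{\epsilon_n\}$ there exist $m$ and continuous maps $g_n\colon X\to Q_n$, $n=1,\dots,m$, with $d_n(f_n(x),g_n(x))\le\epsilon_n$ for all $x\in X$, $n\le m$, and $(g_1(x),\dots,g_m(x))\notin\prod_{n=1}^m A_n$ for all $x\in X$.
   Context: A set is functionally open if it is a cozero set. $X$ is a finite $C$-space if for every sequence $\{\omega_n\}$ of finite covers of $X$ by functionally open sets there exist $k$ and finite families $\gamma_1,\dots,\gamma_k$ of pairwise disjoint functionally open sets such that each $\gamma_n$ refines $\omega_n$ and $\bigcup_{n=1}^k\gamma_n$ covers $X$. A finite-dimensional cube is $Q_n=[a_n,b_n]^{k(n)}\subset\mathbb R^{k(n)}$, with $d_n$ the metric induced by a norm on $\mathbb R^{k(n)}$. *)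

theory Defs
  imports "HOL-Analysis.Analysis" "HOL-Library.Disjoint_Sets"
begin

definition tychonoff_space :: "'a topology \<Rightarrow> bool" where
  "tychonoff_space X \<longleftrightarrow> completely_regular_space X \<and> Hausdorff_space X"

definition functionally_open :: "'a topology \<Rightarrow> 'a set \<Rightarrow> bool" where
  "functionally_open X U \<longleftrightarrow>
     (\<exists>f. continuous_map X euclideanreal f \<and> U = {x \<in> topspace X. f x \<noteq> 0})"

definition refines :: "'a set set \<Rightarrow> 'a set set \<Rightarrow> bool" where
  "refines \<gamma> \<omega> \<longleftrightarrow> (\<forall>U\<in>\<gamma>. \<exists>V\<in>\<omega>. U \<subseteq> V)"

text \<open>Finite C-space (sequences indexed from 0).\<close>
definition finite_C_space :: "'a topology \<Rightarrow> bool" where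
  "finite_C_space X \<longleftrightarrow>
    (\<forall>\<omega> :: nat \<Rightarrow> 'a set set.
       (\<forall>n. finite (\<omega> n) \<and> (\<forall>U\<in>\<omega> n. functionally_open X U) \<and> \<Union>(\<omega> n) = topspace X) \<longrightarrow>
       (\<exists>k. \<exists>\<gamma> :: nat \<Rightarrow> 'a set set.
          (\<forall>n<k. finite (\<gamma> n) \<and> (\<forall>U\<in>\<gamma> n. functionally_open X U) \<and>
                 pairwise disjnt (\<gamma> n) \<and> refines (\<gamma> n) (\<omega> n)) \<and>
          topspace X \<subseteq> (\<Union>n<k. \<Union>(\<gamma> n))))"

text \<open>R^k is represented as the functions nat \<Rightarrow> real vanishing from index k on,
  with the topology Euclidean_space k from HOL-Analysis.\<close>
definition Rk :: "nat \<Rightarrow> (nat \<Rightarrow> real) set" where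
  "Rk k = {x. \<forall>i\<ge>k. x i = 0}"

definition cube :: "real \<Rightarrow> real \<Rightarrow> nat \<Rightarrow> (nat \<Rightarrow> real) set" where
  "cube a b k = {x \<in> Rk k. \<forall>i<k. a \<le> x i \<and> x i \<le> b}"

definition is_norm_on :: "nat \<Rightarrow> ((nat \<Rightarrow> real) \<Rightarrow> real) \<Rightarrow> bool" where
  "is_norm_on k N \<longleftrightarrow>
     (\<forall>x\<in>Rk k. 0 \<le> N x \<and> (N x = 0 \<longleftrightarrow> (\<forall>i. x i = 0))) \<and>
     (\<forall>x\<in>Rk k. \<forall>c. N (\<lambda>i. c * x i) = \<bar>c\<bar> * N x) \<and>
     (\<forall>x\<in>Rk k. \<forall>y\<in>Rk k. N (\<lambda>i. x i + y i) \<le> N x + N y)"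

text \<open>The sequence f is finitely removable from the product of the A n, where
  the n-th cube carries the metric d_n(x,y) = N n (x - y).\<close>
definition finitely_removable ::
  "'a topology \<Rightarrow> (nat \<Rightarrow> (nat \<Rightarrow> real) set) \<Rightarrow> (nat \<Rightarrow> nat)
    \<Rightarrow> (nat \<Rightarrow> (nat \<Rightarrow> real) \<Rightarrow> real) \<Rightarrow> (nat \<Rightarrow> (nat \<Rightarrow> real) set)
    \<Rightarrow> (nat \<Rightarrow> 'a \<Rightarrow> nat \<Rightarrow> real) \<Rightarrow> bool" where
  "finitely_removable X Q k N A f \<longleftrightarrow>
    (\<forall>\<epsilon> :: nat \<Rightarrow> real. (\<forall>n. 0 < \<epsilon> n) \<longrightarrow>
       (\<exists>m. \<exists>g :: nat \<Rightarrow> 'a \<Rightarrow> nat \<Rightarrow> real.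
          (\<forall>n<m. continuous_map X (subtopology (Euclidean_space (k n)) (Q n)) (g n) \<and>
                 (\<forall>x\<in>topspace X. N n (\<lambda>i. f n x i - g n x i) \<le> \<epsilon> n)) \<and>
          (\<forall>x\<in>topspace X. \<exists>n<m. g n x \<notin> A n)))"

end

(* If X is a finite C-space: cover the cube Q_n by finitely many small l1-balls, each containing a
   point off the nowhere dense set A_n; their preimages under f_n form a finite functionally open
   cover omega_n.  The finite C-property refines the omega_n by disjoint families gamma_1, ...,
   gamma_m covering X jointly.  On a member V of gamma_n move f_n towards the point chosen for the
   ball containing f_n(V), by the fraction given by a partition of unity subordinate to all members
   of all gamma_n, rescaled so that at every x some member reaches 1: there g_n(x) is that point,
   which lies outside A_n.

   Conversely, a partition of unity subordinate to omega_n is a map f_n into [0,1]^c, c = |omega_n|.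
   The points whose maximal coordinate is attained twice form a closed nowhere dense set; if the g_n
   are close to the f_n and jointly avoid it, the sets where g_n has a strict maximum at coordinate i
   are disjoint, functionally open, lie in the i-th member of omega_n and together cover X. *)

theory Submission
  imports Defs
begin

section \<open>Cubes and norms\<close>

definition l1_norm :: "nat \<Rightarrow> (nat \<Rightarrow> real) \<Rightarrow> real" where
  "l1_norm k v = (\<Sum>i<k. \<bar>v i\<bar>)"

definition basis_vec :: "nat \<Rightarrow> nat \<Rightarrow> real" where
  "basis_vec m = (\<lambda>j. if j = m then 1 else 0)"

lemma mem_cube_iff: "x \<in> cube a b k \<longleftrightarrow> (\<forall>i\<ge>k. x i = 0) \<and> (\<forall>i<k. a \<le> x i \<and> x i \<le> b)"
  by (simp add: cube_def Rk_def)

lemma cube_subset_Rk: "cube a b k \<subseteq> Rk k"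
  by (auto simp: cube_def)

lemma Euclidean_space_cube: "subtopology (Euclidean_space k) (cube a b k) = top_of_set (cube a b k)"
  using cube_subset_Rk[of a b k]
  unfolding Euclidean_space_def Rk_def
  by (simp add: euclidean_product_topology subtopology_subtopology Int_absorb1)

lemma continuous_map_into_top_of_set_iff:
  "continuous_map X (top_of_set (S :: (nat \<Rightarrow> real) set)) g \<longleftrightarrow>
    (\<forall>i. continuous_map X euclideanreal (\<lambda>x. g x i)) \<and> g ` topspace X \<subseteq> S"
  by (simp add: continuous_map_in_subtopology image_subset_iff Pi_iff
      flip: euclidean_product_topology continuous_map_componentwise_UNIV)

lemma compact_cube: "compact (cube a b k)"
proof -
  have "cube a b k = PiE UNIV (\<lambda>i. if i < k then {a..b} else {0})"
    by (auto simp: mem_cube_iff PiE_iff split: if_splits) (metis not_le)+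
  moreover have "compactin (product_topology (\<lambda>i. euclideanreal) UNIV)
                   (PiE UNIV (\<lambda>i. if i < k then {a..b} else {0::real}))"
    by (simp add: compactin_PiE)
  ultimately show ?thesis
    by (simp add: euclidean_product_topology compactin_euclidean_iff)
qed

lemma cube_convex_comb:
  assumes "x \<in> cube a b k" "y \<in> cube a b k" "0 \<le> t" "t \<le> 1"
  shows "(\<lambda>i. x i + t * (y i - x i)) \<in> cube a b k"
proof -
  have "a \<le> x i + t * (y i - x i) \<and> x i + t * (y i - x i) \<le> b" if "i < k" for i
  proof -
    have "a \<le> x i" "x i \<le> b" "a \<le> y i" "y i \<le> b"
      using assms(1,2) that by (auto simp: mem_cube_iff)
    then have "(1 - t) * a \<le> (1 - t) * x i" "t * a \<le> t * y i"
      "(1 - t) * x i \<le> (1 - t) * b" "t * y i \<le> t * b"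
      using assms(3,4) by (simp_all add: mult_left_mono)
    moreover have "x i + t * (y i - x i) = (1 - t) * x i + t * y i"
      "(1 - t) * a + t * a = a" "(1 - t) * b + t * b = b"
      by (simp_all add: algebra_simps)
    ultimately show ?thesis by linarith
  qed
  then show ?thesis using assms(1,2) by (simp add: mem_cube_iff)
qed

lemma basis_vec_in_cube: "m < k \<Longrightarrow> basis_vec m \<in> cube 0 1 k"
  by (simp add: basis_vec_def mem_cube_iff)

lemma is_norm_on_nonneg: "is_norm_on k N \<Longrightarrow> x \<in> Rk k \<Longrightarrow> 0 \<le> N x"
  and is_norm_on_homogeneous: "is_norm_on k N \<Longrightarrow> x \<in> Rk k \<Longrightarrow> N (\<lambda>i. c * x i) = \<bar>c\<bar> * N x"
  and is_norm_on_triangle: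
    "is_norm_on k N \<Longrightarrow> x \<in> Rk k \<Longrightarrow> y \<in> Rk k \<Longrightarrow> N (\<lambda>i. x i + y i) \<le> N x + N y"
  by (simp_all add: is_norm_on_def)

lemma is_norm_on_zero: "is_norm_on k N \<Longrightarrow> N (\<lambda>i. 0) = 0"
  by (simp add: is_norm_on_def Rk_def)

lemma Rk_diff: "x \<in> Rk k \<Longrightarrow> y \<in> Rk k \<Longrightarrow> (\<lambda>i. x i - y i) \<in> Rk k"
  by (simp add: Rk_def)

lemma is_norm_on_partial_move_le:
  assumes "is_norm_on k N" "x \<in> Rk k" "y \<in> Rk k" "0 \<le> s" "s \<le> 1"
  shows "N (\<lambda>i. x i - (x i + s * (y i - x i))) \<le> N (\<lambda>i. x i - y i)"
proof -
  have "N (\<lambda>i. x i - (x i + s * (y i - x i))) = N (\<lambda>i. s * (x i - y i))"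
    by (simp add: algebra_simps)
  also have "\<dots> = s * N (\<lambda>i. x i - y i)"
    using is_norm_on_homogeneous[OF assms(1) Rk_diff[OF assms(2,3)]] assms(4) by simp
  also have "\<dots> \<le> N (\<lambda>i. x i - y i)"
    using is_norm_on_nonneg[OF assms(1) Rk_diff[OF assms(2,3)]] assms(4,5)
    by (rule mult_left_le_one_le)
  finally show ?thesis .
qed

lemma is_norm_on_le_sum_basis:
  assumes "is_norm_on k N" "m \<le> k" "\<forall>i\<ge>m. v i = 0"
  shows "N v \<le> (\<Sum>i<m. \<bar>v i\<bar> * N (basis_vec i))"
  using assms(2,3)
proof (induction m arbitrary: v)
  case 0
  then have "v = (\<lambda>i. 0)" by auto
  then show ?case using is_norm_on_zero[OF assms(1)] by simp
next
  case (Suc m)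
  define w where "w = v(m := 0)"
  have w: "w \<in> Rk k" "\<forall>i\<ge>m. w i = 0" using Suc.prems by (auto simp: w_def Rk_def)
  have e: "basis_vec m \<in> Rk k" using Suc.prems by (simp add: Rk_def basis_vec_def)
  have "v = (\<lambda>i. w i + v m * basis_vec m i)"
    by (auto simp: w_def basis_vec_def)
  then have "N v \<le> N w + N (\<lambda>i. v m * basis_vec m i)"
    using is_norm_on_triangle[OF assms(1) w(1), of "\<lambda>i. v m * basis_vec m i"] e
    by (simp add: Rk_def)
  also have "N w \<le> (\<Sum>i<m. \<bar>w i\<bar> * N (basis_vec i))"
    using Suc.IH[of w] Suc.prems w(2) by simp
  also have "\<dots> = (\<Sum>i<m. \<bar>v i\<bar> * N (basis_vec i))"
    by (intro sum.cong) (auto simp: w_def)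
  also have "N (\<lambda>i. v m * basis_vec m i) = \<bar>v m\<bar> * N (basis_vec m)"
    by (rule is_norm_on_homogeneous[OF assms(1) e])
  finally show ?case by simp
qed

text \<open>A norm in the sense of \<open>is_norm_on\<close> is not assumed to be continuous; domination by the
  \<open>l\<^sub>1\<close>-norm is what replaces continuity below.\<close>
lemma is_norm_on_le_l1_norm:
  assumes "is_norm_on k N"
  obtains C where "0 < C" "\<And>v. v \<in> Rk k \<Longrightarrow> N v \<le> C * l1_norm k v"
proof
  define C where "C = (\<Sum>i<k. N (basis_vec i)) + 1"
  have N_basis: "0 \<le> N (basis_vec i)" if "i < k" for i
    using is_norm_on_nonneg[OF assms] that by (simp add: Rk_def basis_vec_def)
  have sum_basis_nonneg: "0 \<le> (\<Sum>i<k. N (basis_vec i))"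
    using N_basis by (intro sum_nonneg) simp
  have le_C: "N (basis_vec i) \<le> C" if "i < k" for i
    using member_le_sum[of i "{..<k}" "\<lambda>i. N (basis_vec i)"] N_basis that
    by (simp add: C_def)
  show "0 < C" using sum_basis_nonneg by (simp add: C_def)
  fix v assume "v \<in> Rk k"
  then have "N v \<le> (\<Sum>i<k. \<bar>v i\<bar> * N (basis_vec i))"
    by (intro is_norm_on_le_sum_basis[OF assms]) (auto simp: Rk_def)
  also have "\<dots> \<le> (\<Sum>i<k. \<bar>v i\<bar> * C)"
    by (intro sum_mono mult_left_mono le_C) auto
  also have "\<dots> = C * l1_norm k v"
    by (simp add: l1_norm_def sum_distrib_left mult.commute)
  finally show "N v \<le> C * l1_norm k v" .
qed

lemma is_norm_on_l1_norm: "is_norm_on k (l1_norm k)"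
  unfolding is_norm_on_def
proof (intro conjI ballI allI)
  fix x assume x: "x \<in> Rk k"
  show "0 \<le> l1_norm k x" by (simp add: l1_norm_def sum_nonneg)
  have "l1_norm k x = 0 \<longleftrightarrow> (\<forall>i<k. x i = 0)"
    by (simp add: l1_norm_def sum_nonneg_eq_0_iff Ball_def)
  also have "\<dots> \<longleftrightarrow> (\<forall>i. x i = 0)"
    using x by (auto simp: Rk_def) (metis not_le)
  finally show "l1_norm k x = 0 \<longleftrightarrow> (\<forall>i. x i = 0)" .
  show "l1_norm k (\<lambda>i. c * x i) = \<bar>c\<bar> * l1_norm k x" for c
    by (simp add: l1_norm_def abs_mult sum_distrib_left)
next
  fix x y :: "nat \<Rightarrow> real"
  show "l1_norm k (\<lambda>i. x i + y i) \<le> l1_norm k x + l1_norm k y"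
    unfolding l1_norm_def by (simp add: sum_mono abs_triangle_ineq flip: sum.distrib)
qed

lemma l1_norm_diff_triangle:
  "l1_norm k (\<lambda>i. x i - z i) \<le> l1_norm k (\<lambda>i. x i - y i) + l1_norm k (\<lambda>i. y i - z i)"
  unfolding l1_norm_def by (simp add: sum_mono abs_triangle_ineq4 flip: sum.distrib)

lemma l1_norm_diff_commute: "l1_norm k (\<lambda>i. x i - y i) = l1_norm k (\<lambda>i. y i - x i)"
  unfolding l1_norm_def by (simp add: abs_minus_commute)

lemma continuous_map_l1_norm_diff:
  "(\<And>i. continuous_map X euclideanreal (\<lambda>x. F x i)) \<Longrightarrow>
   continuous_map X euclideanreal (\<lambda>x. l1_norm k (\<lambda>i. F x i - y i))"
  unfolding l1_norm_def by (intro continuous_intros) auto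

lemma open_l1_ball: "open {z. l1_norm k (\<lambda>i. z i - y i) < d}"
proof -
  have "continuous_on UNIV (\<lambda>z::nat\<Rightarrow>real. l1_norm k (\<lambda>i. z i - y i))"
    unfolding l1_norm_def by (intro continuous_intros continuous_on_product_coordinates)
  then show ?thesis by (simp add: open_Collect_less continuous_on_const)
qed

section \<open>Partitions of unity on functionally open covers\<close>

lemma functionally_open_Collect_less:
  assumes "continuous_map X euclideanreal u"
  shows "functionally_open X {x \<in> topspace X. u x < d}"
  unfolding functionally_open_def
proof (intro exI conjI)
  show "continuous_map X euclideanreal (\<lambda>x. max 0 (d - u x))"
    using assms by (intro continuous_intros)
qed auto

lemma functionally_open_Collect_all_less:
  assumes "finite J" "continuous_map X euclideanreal v"
    and "\<And>j. j \<in> J \<Longrightarrow> continuous_map X euclideanreal (u j)"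
  shows "functionally_open X {x \<in> topspace X. \<forall>j\<in>J. u j x < v x}"
  unfolding functionally_open_def
proof (intro exI conjI)
  show "continuous_map X euclideanreal (\<lambda>x. \<Prod>j\<in>J. max 0 (v x - u j x))"
    using assms by (intro continuous_intros) auto
  show "{x \<in> topspace X. \<forall>j\<in>J. u j x < v x} =
        {x \<in> topspace X. (\<Prod>j\<in>J. max 0 (v x - u j x)) \<noteq> 0}"
    using assms(1) by (auto simp: prod_zero_iff max_def not_le)
qed

lemma functionally_open_cover_partition_of_unity:
  assumes "finite I" and opn: "\<And>i. i \<in> I \<Longrightarrow> functionally_open X (U i)"
    and cover: "topspace X \<subseteq> (\<Union>i\<in>I. U i)"
  obtains w where "\<And>i. i \<in> I \<Longrightarrow> continuous_map X euclideanreal (w i)"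
    and "\<And>i x. x \<in> topspace X \<Longrightarrow> 0 \<le> w i x"
    and "\<And>i x. i \<in> I \<Longrightarrow> x \<in> topspace X \<Longrightarrow> x \<notin> U i \<Longrightarrow> w i x = 0"
    and "\<And>x. x \<in> topspace X \<Longrightarrow> (\<Sum>i\<in>I. w i x) = 1"
proof -
  obtain h where h: "\<And>i. i \<in> I \<Longrightarrow>
      continuous_map X euclideanreal (h i) \<and> U i = {x \<in> topspace X. h i x \<noteq> 0}"
    using opn unfolding functionally_open_def by metis
  define S where "S x = (\<Sum>j\<in>I. \<bar>h j x\<bar>)" for x
  have S_pos: "0 < S x" if x: "x \<in> topspace X" for x
  proof -
    obtain i where i: "i \<in> I" "x \<in> U i" using cover x by blast
    then have "0 < \<bar>h i x\<bar>" using h by auto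
    also have "\<dots> \<le> S x"
      unfolding S_def using i(1) \<open>finite I\<close> by (intro member_le_sum) auto
    finally show ?thesis .
  qed
  show thesis
  proof (rule that[of "\<lambda>i x. \<bar>h i x\<bar> / S x"])
    show "continuous_map X euclideanreal (\<lambda>x. \<bar>h i x\<bar> / S x)" if "i \<in> I" for i
      using h that \<open>finite I\<close> unfolding S_def
      by (intro continuous_intros) (auto simp: S_def dest!: S_pos)
    show "\<bar>h i x\<bar> / S x = 0" if "i \<in> I" "x \<in> topspace X" "x \<notin> U i" for i x
      using h that by auto
    show "(\<Sum>i\<in>I. \<bar>h i x\<bar> / S x) = 1" if "x \<in> topspace X" for x
      using S_pos[OF that] by (simp add: S_def flip: sum_divide_distrib)
  qed (simp add: S_def sum_nonneg)
qed

text \<open>Scaling a partition of unity by the number of its members makes, at every point,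
  some member reach the value \<open>1\<close>.\<close>
lemma functionally_open_cover_peaks:
  assumes "finite I" and "\<And>i. i \<in> I \<Longrightarrow> functionally_open X (U i)"
    and "topspace X \<subseteq> (\<Union>i\<in>I. U i)"
  obtains \<phi> where "\<And>i. i \<in> I \<Longrightarrow> continuous_map X euclideanreal (\<phi> i)"
    and "\<And>i x. x \<in> topspace X \<Longrightarrow> 0 \<le> \<phi> i x \<and> \<phi> i x \<le> 1"
    and "\<And>i x. i \<in> I \<Longrightarrow> x \<in> topspace X \<Longrightarrow> x \<notin> U i \<Longrightarrow> \<phi> i x = 0"
    and "\<And>x. x \<in> topspace X \<Longrightarrow> \<exists>i\<in>I. \<phi> i x = 1"
proof -
  obtain w where w_cont: "\<And>i. i \<in> I \<Longrightarrow> continuous_map X euclideanreal (w i)"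
    and w_nonneg: "\<And>i x. x \<in> topspace X \<Longrightarrow> 0 \<le> w i x"
    and w_zero: "\<And>i x. i \<in> I \<Longrightarrow> x \<in> topspace X \<Longrightarrow> x \<notin> U i \<Longrightarrow> w i x = 0"
    and w_sum: "\<And>x. x \<in> topspace X \<Longrightarrow> (\<Sum>i\<in>I. w i x) = 1"
    using functionally_open_cover_partition_of_unity[OF assms] by blast
  show thesis
  proof (rule that[of "\<lambda>i x. min 1 (card I * w i x)"])
    show "\<exists>i\<in>I. min 1 (card I * w i x) = 1" if x: "x \<in> topspace X" for x
    proof (rule ccontr)
      assume no_peak: "\<not> ?thesis"
      have "I \<noteq> {}" using w_sum[OF x] by auto
      then have card_pos: "0 < card I" using \<open>finite I\<close> by (simp add: card_gt_0_iff)
      then have "w i x < 1 / card I" if "i \<in> I" for i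
        using no_peak that by (auto simp: min_def pos_less_divide_eq mult.commute split: if_splits)
      with card_pos have "(\<Sum>i\<in>I. w i x) < card I * (1 / card I)"
        by (intro sum_bounded_above_strict) auto
      then show False using w_sum[OF x] card_pos by simp
    qed
  qed (use w_cont w_nonneg w_zero in \<open>auto intro!: continuous_intros\<close>)
qed

lemma functionally_open_cover_simplex_map:
  assumes "\<And>i. i < c \<Longrightarrow> functionally_open X (U i)" and "topspace X \<subseteq> (\<Union>i<c. U i)"
  obtains F where "continuous_map X (top_of_set (cube 0 1 c)) F"
    and "\<And>x. x \<in> topspace X \<Longrightarrow> (\<Sum>i<c. F x i) = 1"
    and "\<And>x i. x \<in> topspace X \<Longrightarrow> i < c \<Longrightarrow> 0 < F x i \<Longrightarrow> x \<in> U i"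
proof -
  obtain w where w_cont: "\<And>i. i < c \<Longrightarrow> continuous_map X euclideanreal (w i)"
    and w_nonneg: "\<And>i x. x \<in> topspace X \<Longrightarrow> 0 \<le> w i x"
    and w_zero: "\<And>i x. i < c \<Longrightarrow> x \<in> topspace X \<Longrightarrow> x \<notin> U i \<Longrightarrow> w i x = 0"
    and w_sum: "\<And>x. x \<in> topspace X \<Longrightarrow> (\<Sum>i<c. w i x) = 1"
    using functionally_open_cover_partition_of_unity[of "{..<c}" X U] assms by auto
  have w_le_1: "w i x \<le> 1" if "i < c" "x \<in> topspace X" for i x
    using member_le_sum[of i "{..<c}" "\<lambda>i. w i x"] w_nonneg w_sum that by auto
  show thesis
  proof (rule that[of "\<lambda>x i. if i < c then w i x else 0"])
    show "continuous_map X (top_of_set (cube 0 1 c)) (\<lambda>x i. if i < c then w i x else 0)"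
      unfolding continuous_map_into_top_of_set_iff
      using w_cont w_nonneg w_le_1 by (auto simp: mem_cube_iff)
  qed (use w_sum w_zero in \<open>auto simp: less_le\<close>)
qed

section \<open>Finite C-spaces: removing maps from nowhere dense products\<close>

lemma nowhere_dense_l1_near:
  assumes "top_of_set (cube a b k) interior_of A = {}" and "y \<in> cube a b k" and "0 < \<delta>"
  shows "\<exists>q\<in>cube a b k - A. l1_norm k (\<lambda>i. q i - y i) < \<delta>"
proof (rule ccontr)
  let ?B = "cube a b k \<inter> {z. l1_norm k (\<lambda>i. z i - y i) < \<delta>}"
  assume "\<not> ?thesis"
  then have "?B \<subseteq> A" by blast
  moreover have "openin (top_of_set (cube a b k)) ?B"
    by (intro openin_open_Int open_l1_ball)
  moreover have "y \<in> ?B" using assms(2,3) by (simp add: l1_norm_def)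
  ultimately show False
    using assms(1) interior_of_maximal by blast
qed

lemma nowhere_dense_in_cube_net:
  assumes norm: "is_norm_on k N"
    and nowhere_dense: "top_of_set (cube a b k) interior_of A = {}" and "0 < e"
  shows "\<exists>P \<delta> q. finite P \<and> (\<forall>y\<in>P. q y \<in> cube a b k - A) \<and>
           (\<forall>z\<in>cube a b k. \<exists>y\<in>P. l1_norm k (\<lambda>i. z i - y i) < \<delta>) \<and>
           (\<forall>y\<in>P. \<forall>z\<in>cube a b k.
              l1_norm k (\<lambda>i. z i - y i) < \<delta> \<longrightarrow> N (\<lambda>i. z i - q y i) \<le> e)"
proof -
  let ?Q = "cube a b k"
  obtain C where C: "0 < C" "\<And>v. v \<in> Rk k \<Longrightarrow> N v \<le> C * l1_norm k v"
    using is_norm_on_le_l1_norm[OF norm] by blast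
  \<comment> \<open>If \<open>z\<close> and \<open>q y\<close> are both \<open>l\<^sub>1\<close>-closer than \<open>\<delta>\<close> to \<open>y\<close>, then \<open>N (z - q y) \<le> C * 2\<delta> = e\<close>.\<close>
  define \<delta> where "\<delta> = e / (2 * C)"
  have "0 < \<delta>" using C(1) \<open>0 < e\<close> by (simp add: \<delta>_def)
  have "\<exists>q. q \<in> ?Q - A \<and> l1_norm k (\<lambda>i. q i - y i) < \<delta>" if "y \<in> ?Q" for y
    using nowhere_dense_l1_near[OF nowhere_dense that \<open>0 < \<delta>\<close>] by blast
  then obtain q where q: "\<And>y. y \<in> ?Q \<Longrightarrow> q y \<in> ?Q - A \<and> l1_norm k (\<lambda>i. q y i - y i) < \<delta>"
    by metis
  have "?Q \<subseteq> (\<Union>y\<in>?Q. {z. l1_norm k (\<lambda>i. z i - y i) < \<delta>})"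
    using \<open>0 < \<delta>\<close> by (auto simp: l1_norm_def)
  then obtain P where P: "P \<subseteq> ?Q" "finite P"
      "?Q \<subseteq> (\<Union>y\<in>P. {z. l1_norm k (\<lambda>i. z i - y i) < \<delta>})"
    by (rule compactE_image[OF compact_cube open_l1_ball]) blast
  have "N (\<lambda>i. z i - q y i) \<le> e"
    if "y \<in> P" "z \<in> ?Q" and zy: "l1_norm k (\<lambda>i. z i - y i) < \<delta>" for y z
  proof -
    have y: "y \<in> ?Q" using that P(1) by blast
    have "N (\<lambda>i. z i - q y i) \<le> C * l1_norm k (\<lambda>i. z i - q y i)"
      using q[OF y] that cube_subset_Rk by (intro C(2) Rk_diff) auto
    also have "\<dots> \<le> C * (l1_norm k (\<lambda>i. z i - y i) + l1_norm k (\<lambda>i. y i - q y i))"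
      using C(1) by (intro mult_left_mono l1_norm_diff_triangle) auto
    also have "\<dots> \<le> C * (2 * \<delta>)"
      using C(1) zy q[OF y] l1_norm_diff_commute[of k "q y" y] by (intro mult_left_mono) auto
    also have "\<dots> = e" using C(1) by (simp add: \<delta>_def)
    finally show ?thesis .
  qed
  with P \<open>0 < \<delta>\<close> q show ?thesis by (intro exI[of _ P] exI[of _ \<delta>] exI[of _ q]) auto
qed

lemma nowhere_dense_in_cubes_nets:
  assumes "\<And>n. is_norm_on (k n) (N n)"
    and "\<And>n. top_of_set (cube (a n) (b n) (k n)) interior_of A n = {}" and "\<And>n. 0 < \<epsilon> n"
  obtains P q \<delta> where "\<And>n. finite (P n)"
    and "\<And>n y. y \<in> P n \<Longrightarrow> q n y \<in> cube (a n) (b n) (k n) - A n"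
    and "\<And>n z. z \<in> cube (a n) (b n) (k n) \<Longrightarrow> \<exists>y\<in>P n. l1_norm (k n) (\<lambda>i. z i - y i) < \<delta> n"
    and "\<And>n y z. \<lbrakk>y \<in> P n; z \<in> cube (a n) (b n) (k n); l1_norm (k n) (\<lambda>i. z i - y i) < \<delta> n\<rbrakk>
                 \<Longrightarrow> N n (\<lambda>i. z i - q n y i) \<le> \<epsilon> n"
proof -
  have "\<forall>n. \<exists>P \<delta> q. finite P \<and>
          (\<forall>y\<in>P. q y \<in> cube (a n) (b n) (k n) - A n) \<and>
          (\<forall>z\<in>cube (a n) (b n) (k n). \<exists>y\<in>P. l1_norm (k n) (\<lambda>i. z i - y i) < \<delta>) \<and>
          (\<forall>y\<in>P. \<forall>z\<in>cube (a n) (b n) (k n).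
             l1_norm (k n) (\<lambda>i. z i - y i) < \<delta> \<longrightarrow> N n (\<lambda>i. z i - q y i) \<le> \<epsilon> n)"
    by (intro allI nowhere_dense_in_cube_net assms)
  then obtain P \<delta> q where "\<forall>n. finite (P n) \<and>
          (\<forall>y\<in>P n. q n y \<in> cube (a n) (b n) (k n) - A n) \<and>
          (\<forall>z\<in>cube (a n) (b n) (k n). \<exists>y\<in>P n. l1_norm (k n) (\<lambda>i. z i - y i) < \<delta> n) \<and>
          (\<forall>y\<in>P n. \<forall>z\<in>cube (a n) (b n) (k n).
             l1_norm (k n) (\<lambda>i. z i - y i) < \<delta> n \<longrightarrow> N n (\<lambda>i. z i - q n y i) \<le> \<epsilon> n)"
    unfolding choice_iff by blast
  then show thesis by (intro that[where P = P and \<delta> = \<delta> and q = q]) auto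
qed

text \<open>For a disjoint family \<open>\<gamma>\<close> and \<open>\<phi> V\<close> vanishing off \<open>V\<close>, at most one summand is nonzero:
  \<open>F x\<close> is moved towards \<open>t V\<close> by the fraction \<open>\<phi> V x\<close>, where \<open>V\<close> is the member containing \<open>x\<close>.\<close>
definition move_toward ::
  "'b set set \<Rightarrow> ('b set \<Rightarrow> 'b \<Rightarrow> real) \<Rightarrow> ('b set \<Rightarrow> nat \<Rightarrow> real)
    \<Rightarrow> ('b \<Rightarrow> nat \<Rightarrow> real) \<Rightarrow> 'b \<Rightarrow> nat \<Rightarrow> real" where
  "move_toward \<gamma> \<phi> t F x i = F x i + (\<Sum>V\<in>\<gamma>. \<phi> V x * (t V i - F x i))"

lemma move_toward_in_member:
  assumes "finite \<gamma>" "pairwise disjnt \<gamma>" "V \<in> \<gamma>" "x \<in> V"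
    and "\<And>W. W \<in> \<gamma> \<Longrightarrow> x \<notin> W \<Longrightarrow> \<phi> W x = 0"
  shows "move_toward \<gamma> \<phi> t F x = (\<lambda>i. F x i + \<phi> V x * (t V i - F x i))"
proof
  fix i
  have "x \<notin> W" if "W \<in> \<gamma> - {V}" for W
    using assms(2-4) that by (auto simp: pairwise_def disjnt_def)
  then have "(\<Sum>W\<in>\<gamma>. \<phi> W x * (t W i - F x i)) = (\<Sum>W\<in>{V}. \<phi> W x * (t W i - F x i))"
    using assms by (intro sum.mono_neutral_right) auto
  then show "move_toward \<gamma> \<phi> t F x i = F x i + \<phi> V x * (t V i - F x i)"
    by (simp add: move_toward_def)
qed

lemma move_toward_outside:
  "(\<And>W. W \<in> \<gamma> \<Longrightarrow> \<phi> W x = 0) \<Longrightarrow> move_toward \<gamma> \<phi> t F x = F x"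
  by (simp add: move_toward_def fun_eq_iff)

lemma continuous_map_move_toward:
  assumes "finite \<gamma>" "pairwise disjnt \<gamma>"
    and F: "continuous_map X (top_of_set (cube a b k)) F"
    and \<phi>: "\<And>V. V \<in> \<gamma> \<Longrightarrow> continuous_map X euclideanreal (\<phi> V)"
    and \<phi>_01: "\<And>V x. V \<in> \<gamma> \<Longrightarrow> x \<in> topspace X \<Longrightarrow> 0 \<le> \<phi> V x \<and> \<phi> V x \<le> 1"
    and \<phi>_zero: "\<And>V x. V \<in> \<gamma> \<Longrightarrow> x \<in> topspace X \<Longrightarrow> x \<notin> V \<Longrightarrow> \<phi> V x = 0"
    and t: "\<And>V. V \<in> \<gamma> \<Longrightarrow> t V \<in> cube a b k"
  shows "continuous_map X (top_of_set (cube a b k)) (move_toward \<gamma> \<phi> t F)"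
  unfolding continuous_map_into_top_of_set_iff
proof (intro conjI allI image_subsetI)
  have F_cont: "continuous_map X euclideanreal (\<lambda>x. F x i)" for i
    using F by (simp add: continuous_map_into_top_of_set_iff)
  have F_cube: "F x \<in> cube a b k" if "x \<in> topspace X" for x
    using F that by (auto simp: continuous_map_into_top_of_set_iff)
  show "continuous_map X euclideanreal (\<lambda>x. move_toward \<gamma> \<phi> t F x i)" for i
    unfolding move_toward_def using assms(1) \<phi> F_cont by (intro continuous_intros) auto
  fix x assume x: "x \<in> topspace X"
  show "move_toward \<gamma> \<phi> t F x \<in> cube a b k"
  proof (cases "\<exists>V\<in>\<gamma>. x \<in> V")
    case True
    then obtain V where "V \<in> \<gamma>" "x \<in> V" by blast
    then show ?thesis
      using move_toward_in_member[OF assms(1,2)] \<phi>_zero \<phi>_01 x t F_cube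
      by (simp add: cube_convex_comb)
  next
    case False
    then show ?thesis using move_toward_outside[of \<gamma> \<phi> x] \<phi>_zero x F_cube by simp
  qed
qed

lemma is_norm_on_move_toward_le:
  assumes norm: "is_norm_on k N" and "finite \<gamma>" "pairwise disjnt \<gamma>"
    and F: "F x \<in> cube a b k" and t: "\<And>V. V \<in> \<gamma> \<Longrightarrow> t V \<in> cube a b k"
    and \<phi>_01: "\<And>V. V \<in> \<gamma> \<Longrightarrow> 0 \<le> \<phi> V x \<and> \<phi> V x \<le> 1"
    and \<phi>_zero: "\<And>V. V \<in> \<gamma> \<Longrightarrow> x \<notin> V \<Longrightarrow> \<phi> V x = 0"
    and close: "\<And>V. V \<in> \<gamma> \<Longrightarrow> x \<in> V \<Longrightarrow> N (\<lambda>i. F x i - t V i) \<le> e" and "0 \<le> e"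
  shows "N (\<lambda>i. F x i - move_toward \<gamma> \<phi> t F x i) \<le> e"
proof (cases "\<exists>V\<in>\<gamma>. x \<in> V")
  case True
  then obtain V where V: "V \<in> \<gamma>" "x \<in> V" by blast
  have "move_toward \<gamma> \<phi> t F x = (\<lambda>i. F x i + \<phi> V x * (t V i - F x i))"
    using assms(2,3) V \<phi>_zero by (rule move_toward_in_member)
  then have "N (\<lambda>i. F x i - move_toward \<gamma> \<phi> t F x i) =
             N (\<lambda>i. F x i - (F x i + \<phi> V x * (t V i - F x i)))"
    by simp
  also have "\<dots> \<le> N (\<lambda>i. F x i - t V i)"
    using norm F t[OF V(1)] cube_subset_Rk \<phi>_01[OF V(1)]
    by (intro is_norm_on_partial_move_le) auto
  also have "\<dots> \<le> e" using close[OF V] .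
  finally show ?thesis .
next
  case False
  then show ?thesis
    using move_toward_outside[of \<gamma> \<phi> x t F] \<phi>_zero is_norm_on_zero[OF norm] \<open>0 \<le> e\<close> by simp
qed

lemma perturb_off_product:
  fixes m :: nat
  assumes norm: "\<And>n. n < m \<Longrightarrow> is_norm_on (k n) (N n)"
    and f: "\<And>n. n < m \<Longrightarrow> continuous_map X (top_of_set (cube (a n) (b n) (k n))) (f n)"
    and \<gamma>: "\<And>n. n < m \<Longrightarrow>
             finite (\<gamma> n) \<and> pairwise disjnt (\<gamma> n) \<and> (\<forall>V\<in>\<gamma> n. functionally_open X V)"
    and cover: "topspace X \<subseteq> (\<Union>n<m. \<Union>(\<gamma> n))"
    and t: "\<And>n V. n < m \<Longrightarrow> V \<in> \<gamma> n \<Longrightarrow> t n V \<in> cube (a n) (b n) (k n) - A n"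
    and close: "\<And>n V x. \<lbrakk>n < m; V \<in> \<gamma> n; x \<in> V\<rbrakk> \<Longrightarrow> N n (\<lambda>i. f n x i - t n V i) \<le> \<epsilon> n"
    and \<epsilon>: "\<And>n. 0 \<le> \<epsilon> n"
  shows "\<exists>g. (\<forall>n<m. continuous_map X (top_of_set (cube (a n) (b n) (k n))) (g n) \<and>
               (\<forall>x\<in>topspace X. N n (\<lambda>i. f n x i - g n x i) \<le> \<epsilon> n)) \<and>
             (\<forall>x\<in>topspace X. \<exists>n<m. g n x \<notin> A n)"
proof -
  have fin: "finite (Sigma {..<m} \<gamma>)" by (rule finite_SigmaI) (use \<gamma> in auto)
  have opn: "functionally_open X (snd p)" if "p \<in> Sigma {..<m} \<gamma>" for p
    using that \<gamma> by (auto simp: Sigma_def)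
  have cov: "topspace X \<subseteq> (\<Union>p\<in>Sigma {..<m} \<gamma>. snd p)" using cover by (auto simp: Sigma_def)
  obtain \<phi> where \<phi>_cont: "\<And>p. p \<in> Sigma {..<m} \<gamma> \<Longrightarrow> continuous_map X euclideanreal (\<phi> p)"
    and \<phi>_01: "\<And>p x. x \<in> topspace X \<Longrightarrow> 0 \<le> \<phi> p x \<and> \<phi> p x \<le> 1"
    and \<phi>_zero: "\<And>p x. \<lbrakk>p \<in> Sigma {..<m} \<gamma>; x \<in> topspace X; x \<notin> snd p\<rbrakk> \<Longrightarrow> \<phi> p x = 0"
    and \<phi>_peak: "\<And>x. x \<in> topspace X \<Longrightarrow> \<exists>p\<in>Sigma {..<m} \<gamma>. \<phi> p x = 1"
    using functionally_open_cover_peaks[OF fin opn cov] by blast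
  define g where "g n = move_toward (\<gamma> n) (\<lambda>V. \<phi> (n, V)) (t n) (f n)" for n
  have g_member: "g n x = (\<lambda>i. f n x i + \<phi> (n, V) x * (t n V i - f n x i))"
    if "n < m" "V \<in> \<gamma> n" "x \<in> V" "x \<in> topspace X" for n V x
    unfolding g_def using that \<gamma> \<phi>_zero by (intro move_toward_in_member) auto
  have g_cont: "continuous_map X (top_of_set (cube (a n) (b n) (k n))) (g n)" if "n < m" for n
    unfolding g_def using that \<gamma> \<phi>_cont \<phi>_01 \<phi>_zero t
    by (intro continuous_map_move_toward f) auto
  have g_close: "N n (\<lambda>i. f n x i - g n x i) \<le> \<epsilon> n" if n: "n < m" and x: "x \<in> topspace X" for n x
    unfolding g_def using n \<gamma>[OF n] t[OF n] close[OF n] \<phi>_01[OF x] \<phi>_zero[OF _ x] f[OF n] x \<epsilon>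
    by (intro is_norm_on_move_toward_le[OF norm[OF n]])
      (auto simp: continuous_map_into_top_of_set_iff)
  have g_off: "\<exists>n<m. g n x \<notin> A n" if x: "x \<in> topspace X" for x
  proof -
    obtain n V where nV: "n < m" "V \<in> \<gamma> n" and peak: "\<phi> (n, V) x = 1"
      using \<phi>_peak[OF x] by auto
    then have "x \<in> V" using \<phi>_zero[of "(n, V)" x] x by auto
    then have "g n x = t n V" using g_member[OF nV _ x] peak by simp
    then show ?thesis using t[OF nV] nV(1) by auto
  qed
  show ?thesis using g_cont g_close g_off by blast
qed

lemma functionally_open_cover_l1_preimages:
  assumes F: "continuous_map X (top_of_set (cube a b k)) F" and "finite P"
    and net: "\<And>z. z \<in> cube a b k \<Longrightarrow> \<exists>y\<in>P. l1_norm k (\<lambda>i. z i - y i) < \<delta>"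
  defines "\<omega> \<equiv> (\<lambda>y. {x \<in> topspace X. l1_norm k (\<lambda>i. F x i - y i) < \<delta>}) ` P"
  shows "finite \<omega> \<and> (\<forall>U\<in>\<omega>. functionally_open X U) \<and> \<Union>\<omega> = topspace X"
proof (intro conjI ballI)
  show "finite \<omega>" using \<open>finite P\<close> by (simp add: \<omega>_def)
  show "functionally_open X U" if "U \<in> \<omega>" for U
    using that F unfolding \<omega>_def
    by (auto intro!: functionally_open_Collect_less continuous_map_l1_norm_diff
        simp: continuous_map_into_top_of_set_iff)
  have "F x \<in> cube a b k" if "x \<in> topspace X" for x
    using F that by (auto simp: continuous_map_into_top_of_set_iff)
  then show "\<Union>\<omega> = topspace X"
    using net by (fastforce simp: \<omega>_def)
qed

lemma finitely_removable_if_finite_C_space: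
  assumes C_space: "finite_C_space X"
    and norm: "\<And>n. is_norm_on (k n) (N n)"
    and nowhere_dense: "\<And>n. top_of_set (cube (a n) (b n) (k n)) interior_of A n = {}"
    and f: "\<And>n. continuous_map X (top_of_set (cube (a n) (b n) (k n))) (f n)"
  shows "finitely_removable X (\<lambda>n. cube (a n) (b n) (k n)) k N A f"
  unfolding finitely_removable_def Euclidean_space_cube
proof (intro allI impI)
  fix \<epsilon> :: "nat \<Rightarrow> real" assume \<epsilon>: "\<forall>n. 0 < \<epsilon> n"
  obtain P q \<delta> where P_finite: "\<And>n. finite (P n)"
    and q: "\<And>n y. y \<in> P n \<Longrightarrow> q n y \<in> cube (a n) (b n) (k n) - A n"
    and P_net: "\<And>n z. z \<in> cube (a n) (b n) (k n) \<Longrightarrow> \<exists>y\<in>P n. l1_norm (k n) (\<lambda>i. z i - y i) < \<delta> n"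
    and q_close: "\<And>n y z. \<lbrakk>y \<in> P n; z \<in> cube (a n) (b n) (k n); l1_norm (k n) (\<lambda>i. z i - y i) < \<delta> n\<rbrakk>
                    \<Longrightarrow> N n (\<lambda>i. z i - q n y i) \<le> \<epsilon> n"
    by (elim nowhere_dense_in_cubes_nets[where \<epsilon> = \<epsilon>, OF norm nowhere_dense \<epsilon>[rule_format]])
  have f_cube: "f n x \<in> cube (a n) (b n) (k n)" if "x \<in> topspace X" for n x
    using f[of n] that by (auto simp: continuous_map_into_top_of_set_iff)
  define B where "B n y = {x \<in> topspace X. l1_norm (k n) (\<lambda>i. f n x i - y i) < \<delta> n}" for n y
  have "finite (B n ` P n) \<and> (\<forall>U\<in>B n ` P n. functionally_open X U) \<and>
        \<Union>(B n ` P n) = topspace X" for n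
    unfolding B_def by (rule functionally_open_cover_l1_preimages[OF f P_finite P_net])
  from C_space[unfolded finite_C_space_def, rule_format, where \<omega> = "\<lambda>n. B n ` P n", OF this]
  obtain m \<gamma> where
      \<gamma>: "\<forall>n<m. finite (\<gamma> n) \<and> (\<forall>V\<in>\<gamma> n. functionally_open X V) \<and>
                 pairwise disjnt (\<gamma> n) \<and> refines (\<gamma> n) (B n ` P n)"
    and cover: "topspace X \<subseteq> (\<Union>n<m. \<Union>(\<gamma> n))"
    by (elim exE conjE)
  have "\<exists>y\<in>P n. V \<subseteq> B n y" if "n < m" "V \<in> \<gamma> n" for n V
    using \<gamma> that unfolding refines_def by blast
  then obtain y where y: "\<And>n V. n < m \<Longrightarrow> V \<in> \<gamma> n \<Longrightarrow> y n V \<in> P n \<and> V \<subseteq> B n (y n V)"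
    by metis
  show "\<exists>m g. (\<forall>n<m. continuous_map X (top_of_set (cube (a n) (b n) (k n))) (g n) \<and>
               (\<forall>x\<in>topspace X. N n (\<lambda>i. f n x i - g n x i) \<le> \<epsilon> n)) \<and>
             (\<forall>x\<in>topspace X. \<exists>n<m. g n x \<notin> A n)"
  proof (rule exI[of _ m], rule perturb_off_product[where t = "\<lambda>n V. q n (y n V)"])
    show "q n (y n V) \<in> cube (a n) (b n) (k n) - A n" if "n < m" "V \<in> \<gamma> n" for n V
      using q y that by simp
    show "N n (\<lambda>i. f n x i - q n (y n V) i) \<le> \<epsilon> n" if "n < m" "V \<in> \<gamma> n" "x \<in> V" for n V x
      using y[OF that(1,2)] that(3) f_cube by (intro q_close) (auto simp: B_def)
  qed (use \<gamma> cover \<epsilon> in \<open>simp_all add: norm f less_imp_le\<close>)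
qed

section \<open>Finite removability from tied maxima gives finite C-spaces\<close>

definition cube_tied_max :: "nat \<Rightarrow> (nat \<Rightarrow> real) set" where
  "cube_tied_max c = {y \<in> cube 0 1 c. \<forall>i<c. \<exists>j<c. j \<noteq> i \<and> y i \<le> y j}"

lemma cube_tied_max_subset: "cube_tied_max c \<subseteq> cube 0 1 c"
  by (auto simp: cube_tied_max_def)

lemma closedin_cube_tied_max: "closedin (top_of_set (cube 0 1 c)) (cube_tied_max c)"
proof -
  have "cube_tied_max c =
        cube 0 1 c \<inter> (\<Inter>i\<in>{..<c}. \<Union>j\<in>{j. j < c \<and> j \<noteq> i}. {y. y i \<le> y j})"
    by (auto simp: cube_tied_max_def)
  moreover have "closed {y :: nat \<Rightarrow> real. y i \<le> y j}" for i j
    by (intro closed_Collect_le continuous_on_product_coordinates)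
  ultimately show ?thesis
    by (simp add: closedin_closed_Int closed_INT closed_UN)
qed

text \<open>Moving a point of the cube towards the vertex \<open>basis_vec i\<^sub>0\<close> of a maximal coordinate
  \<open>i\<^sub>0\<close> makes that maximum strict.\<close>
lemma cube_tied_max_interior_empty:
  assumes "1 \<le> c"
  shows "top_of_set (cube 0 1 c) interior_of cube_tied_max c = {}"
  unfolding interior_of_eq_empty
proof (intro allI impI, elim conjE)
  fix T assume T_open: "openin (top_of_set (cube 0 1 c)) T" and T_sub: "T \<subseteq> cube_tied_max c"
  show "T = {}"
  proof (rule ccontr)
    assume "T \<noteq> {}"
    then obtain y where "y \<in> T" by blast
    obtain U where U: "open U" "T = cube 0 1 c \<inter> U"
      using T_open by (auto simp: openin_open)
    have y: "y \<in> cube 0 1 c" "y \<in> U" using \<open>y \<in> T\<close> U by auto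
    have "Max (y ` {..<c}) \<in> y ` {..<c}" using assms by (intro Max_in) (auto simp: lessThan_empty_iff)
    then obtain i0 where i0: "i0 < c" "y i0 = Max (y ` {..<c})" by auto
    then have y_le: "y j \<le> y i0" if "j < c" for j using that by simp
    define p where "p t = (\<lambda>i. y i + t * (basis_vec i0 i - y i))" for t :: real
    have "continuous_on UNIV p"
      unfolding p_def by (rule continuous_on_coordinatewise_then_product) (intro continuous_intros)
    then have "open (p -` U)" by (rule open_vimage[OF U(1)])
    moreover have "0 \<in> p -` U" using y(2) by (simp add: p_def)
    ultimately obtain e where "0 < e" "ball 0 e \<subseteq> p -` U" by (rule openE)
    define t where "t = min (e / 2) 1"
    have t: "0 < t" "t \<le> 1" using \<open>0 < e\<close> by (auto simp: t_def)
    have "t \<in> ball 0 e" using \<open>0 < e\<close> by (simp add: t_def)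
    then have "p t \<in> U" using \<open>ball 0 e \<subseteq> p -` U\<close> by blast
    moreover have "p t \<in> cube 0 1 c"
      unfolding p_def using y(1) basis_vec_in_cube[OF i0(1)] t by (intro cube_convex_comb) auto
    ultimately have "p t \<in> cube_tied_max c" using U(2) T_sub by blast
    then obtain j where j: "j < c" "j \<noteq> i0" "p t i0 \<le> p t j"
      using i0(1) by (auto simp: cube_tied_max_def)
    have "y i0 \<le> 1" using y(1) i0(1) by (simp add: mem_cube_iff)
    then have "0 \<le> (1 - t) * (y i0 - y j)" using y_le[OF j(1)] t by simp
    moreover have "p t i0 - p t j = (1 - t) * (y i0 - y j) + t"
      using j(2) by (simp add: p_def basis_vec_def algebra_simps)
    ultimately show False using j(3) t(1) by linarith
  qed
qed

lemma simplex_l1_close_max_coord_pos: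
  assumes sum_F: "(\<Sum>j<c. F j) = 1"
    and close: "(real c + 1) * l1_norm c (\<lambda>j. F j - G j) < 1"
    and "i < c" and max: "\<And>j. j < c \<Longrightarrow> G j \<le> G i"
  shows "0 < F i"
proof -
  define \<delta> where "\<delta> = l1_norm c (\<lambda>j. F j - G j)"
  have "(\<Sum>j<c. F j) - (\<Sum>j<c. G j) \<le> \<delta>"
    unfolding \<delta>_def l1_norm_def by (simp add: sum_subtractf[symmetric] sum_mono)
  moreover have "(\<Sum>j<c. G j) \<le> c * G i"
    using sum_bounded_above[of "{..<c}" G "G i"] max by simp
  moreover have "G i - \<delta> \<le> F i"
    using member_le_sum[of i "{..<c}" "\<lambda>j. \<bar>F j - G j\<bar>"] \<open>i < c\<close>
    by (simp add: \<delta>_def l1_norm_def)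
  then have "c * (G i - \<delta>) \<le> c * F i" by (simp add: mult_left_mono)
  ultimately have "0 < c * F i"
    using sum_F close by (simp add: \<delta>_def algebra_simps)
  then show ?thesis by (simp add: zero_less_mult_iff)
qed

definition strict_max_set :: "'a topology \<Rightarrow> ('a \<Rightarrow> nat \<Rightarrow> real) \<Rightarrow> nat \<Rightarrow> nat \<Rightarrow> 'a set" where
  "strict_max_set X G c i = {x \<in> topspace X. \<forall>j\<in>{j. j < c \<and> j \<noteq> i}. G x j < G x i}"

lemma functionally_open_strict_max_set:
  "(\<And>j. continuous_map X euclideanreal (\<lambda>x. G x j)) \<Longrightarrow>
   functionally_open X (strict_max_set X G c i)"
  unfolding strict_max_set_def by (intro functionally_open_Collect_all_less) auto

lemma pairwise_disjnt_strict_max_sets: "pairwise disjnt (strict_max_set X G c ` {..<c})"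
proof (rule pairwise_imageI)
  fix i j assume ij: "i \<in> {..<c}" "j \<in> {..<c}" "i \<noteq> j"
  have "G x j < G x i" if "x \<in> strict_max_set X G c i" for x
    using that ij by (auto simp: strict_max_set_def)
  moreover have "G x i < G x j" if "x \<in> strict_max_set X G c j" for x
    using that ij by (auto simp: strict_max_set_def)
  ultimately show "disjnt (strict_max_set X G c i) (strict_max_set X G c j)"
    by (force simp: disjnt_def)
qed

lemma strict_max_sets_cover:
  assumes g: "\<And>n. n < m \<Longrightarrow> continuous_map X (top_of_set (cube 0 1 (c n))) (g n)"
    and g_off: "\<forall>x\<in>topspace X. \<exists>n<m. g n x \<notin> cube_tied_max (c n)"
  shows "topspace X \<subseteq> (\<Union>n<m. \<Union>(strict_max_set X (g n) (c n) ` {..<c n}))"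
proof
  fix x assume x: "x \<in> topspace X"
  then obtain n where n: "n < m" "g n x \<notin> cube_tied_max (c n)" using g_off by blast
  moreover have "g n x \<in> cube 0 1 (c n)"
    using g[OF n(1)] x by (auto simp: continuous_map_into_top_of_set_iff)
  ultimately obtain i where "i < c n" "\<forall>j<c n. j \<noteq> i \<longrightarrow> g n x j < g n x i"
    by (auto simp: cube_tied_max_def not_le)
  with n(1) x show "x \<in> (\<Union>n<m. \<Union>(strict_max_set X (g n) (c n) ` {..<c n}))"
    by (auto simp: strict_max_set_def)
qed

lemma strict_max_set_subset_support:
  assumes "x \<in> strict_max_set X G c i" "i < c"
    and sum_F: "(\<Sum>j<c. F x j) = 1"
    and close: "l1_norm c (\<lambda>j. F x j - G x j) \<le> 1 / (real c + 2)"
  shows "0 < F x i"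
proof (rule simplex_l1_close_max_coord_pos[OF sum_F _ \<open>i < c\<close>])
  have "(real c + 1) * l1_norm c (\<lambda>j. F x j - G x j) \<le> (real c + 1) * (1 / (real c + 2))"
    using close by (intro mult_left_mono) auto
  also have "\<dots> < 1" by simp
  finally show "(real c + 1) * l1_norm c (\<lambda>j. F x j - G x j) < 1" .
  show "G x j \<le> G x i" if "j < c" for j
    using assms(1) that by (cases "j = i") (auto simp: strict_max_set_def)
qed

lemma strict_max_sets_refine:
  assumes F_sum: "\<And>x. x \<in> topspace X \<Longrightarrow> (\<Sum>i<c. F x i) = 1"
    and F_supp: "\<And>x i. \<lbrakk>x \<in> topspace X; i < c; 0 < F x i\<rbrakk> \<Longrightarrow> x \<in> U i"
    and G: "continuous_map X (top_of_set (cube 0 1 c)) G"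
    and close: "\<And>x. x \<in> topspace X \<Longrightarrow> l1_norm c (\<lambda>j. F x j - G x j) \<le> 1 / (real c + 2)"
  shows "finite (strict_max_set X G c ` {..<c}) \<and>
         (\<forall>V\<in>strict_max_set X G c ` {..<c}. functionally_open X V) \<and>
         pairwise disjnt (strict_max_set X G c ` {..<c}) \<and>
         refines (strict_max_set X G c ` {..<c}) (U ` {..<c})"
proof (intro conjI ballI)
  show "finite (strict_max_set X G c ` {..<c})" by simp
  show "functionally_open X V" if "V \<in> strict_max_set X G c ` {..<c}" for V
    using that G by (auto intro!: functionally_open_strict_max_set
        simp: continuous_map_into_top_of_set_iff)
  show "pairwise disjnt (strict_max_set X G c ` {..<c})"
    by (rule pairwise_disjnt_strict_max_sets)
  have "strict_max_set X G c i \<subseteq> U i" if "i < c" for i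
  proof
    fix x assume x: "x \<in> strict_max_set X G c i"
    then have "x \<in> topspace X" by (simp add: strict_max_set_def)
    with x F_sum close \<open>i < c\<close> have "0 < F x i"
      by (intro strict_max_set_subset_support) auto
    then show "x \<in> U i" using F_supp \<open>x \<in> topspace X\<close> \<open>i < c\<close> by blast
  qed
  then show "refines (strict_max_set X G c ` {..<c}) (U ` {..<c})"
    unfolding refines_def by blast
qed

lemma finite_eq_image_lessThan_card: "finite S \<Longrightarrow> \<exists>U. S = U ` {..<card S}"
  using ex_bij_betw_nat_finite[of S] by (metis atLeast0LessThan bij_betw_imp_surj_on)

lemma functionally_open_covers_simplex_maps:
  assumes \<omega>: "\<forall>n. finite (\<omega> n) \<and> (\<forall>U\<in>\<omega> n. functionally_open X U) \<and> \<Union>(\<omega> n) = topspace X"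
    and "topspace X \<noteq> {}"
  obtains c U f where "\<And>n. 1 \<le> c n" and "\<And>n. \<omega> n = U n ` {..<c n}"
    and "\<And>n. continuous_map X (top_of_set (cube 0 1 (c n))) (f n)"
    and "\<And>n x. x \<in> topspace X \<Longrightarrow> (\<Sum>i<c n. f n x i) = 1"
    and "\<And>n x i. \<lbrakk>x \<in> topspace X; i < c n; 0 < f n x i\<rbrakk> \<Longrightarrow> x \<in> U n i"
proof -
  have \<omega>_finite: "finite (\<omega> n)" and \<omega>_open: "V \<in> \<omega> n \<Longrightarrow> functionally_open X V"
    and \<omega>_cover: "\<Union>(\<omega> n) = topspace X" for n V
    using \<omega> by auto
  define c where "c n = card (\<omega> n)" for n
  have c_pos: "1 \<le> c n" for n
    using \<omega>_finite \<omega>_cover \<open>topspace X \<noteq> {}\<close> by (fastforce simp: c_def Suc_le_eq card_gt_0_iff)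
  have "\<exists>U. \<omega> n = U ` {..<c n}" for n
    unfolding c_def by (rule finite_eq_image_lessThan_card[OF \<omega>_finite])
  then obtain U where U: "\<And>n. \<omega> n = U n ` {..<c n}" by metis
  have "\<forall>n. \<exists>F. continuous_map X (top_of_set (cube 0 1 (c n))) F \<and>
            (\<forall>x\<in>topspace X. (\<Sum>i<c n. F x i) = 1) \<and>
            (\<forall>x\<in>topspace X. \<forall>i<c n. 0 < F x i \<longrightarrow> x \<in> U n i)"
  proof
    fix n
    have "U n i \<in> \<omega> n" if "i < c n" for i using that by (simp add: U)
    then have opn: "functionally_open X (U n i)" if "i < c n" for i using that \<omega>_open by blast
    have cov: "topspace X \<subseteq> (\<Union>i<c n. U n i)" using \<omega>_cover[of n] by (simp add: U)
    obtain F where "continuous_map X (top_of_set (cube 0 1 (c n))) F"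
      and "\<And>x. x \<in> topspace X \<Longrightarrow> (\<Sum>i<c n. F x i) = 1"
      and "\<And>x i. x \<in> topspace X \<Longrightarrow> i < c n \<Longrightarrow> 0 < F x i \<Longrightarrow> x \<in> U n i"
      using functionally_open_cover_simplex_map[OF opn cov] by blast
    then show "\<exists>F. continuous_map X (top_of_set (cube 0 1 (c n))) F \<and>
            (\<forall>x\<in>topspace X. (\<Sum>i<c n. F x i) = 1) \<and>
            (\<forall>x\<in>topspace X. \<forall>i<c n. 0 < F x i \<longrightarrow> x \<in> U n i)"
      by blast
  qed
  from choice[OF this] obtain f where "\<forall>n. continuous_map X (top_of_set (cube 0 1 (c n))) (f n) \<and>
            (\<forall>x\<in>topspace X. (\<Sum>i<c n. f n x i) = 1) \<and>
            (\<forall>x\<in>topspace X. \<forall>i<c n. 0 < f n x i \<longrightarrow> x \<in> U n i)"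
    by blast
  with c_pos U show thesis by (intro that[of c U f]) auto
qed

lemma finite_C_space_if_tied_max_removable:
  assumes removable: "\<And>c f. \<lbrakk>\<And>n. 1 \<le> c n;
      \<And>n. continuous_map X (top_of_set (cube 0 1 (c n))) (f n)\<rbrakk> \<Longrightarrow>
      finitely_removable X (\<lambda>n. cube 0 1 (c n)) c (\<lambda>n. l1_norm (c n)) (\<lambda>n. cube_tied_max (c n)) f"
  shows "finite_C_space X"
  unfolding finite_C_space_def
proof (intro allI impI)
  fix \<omega> :: "nat \<Rightarrow> 'a set set"
  assume \<omega>: "\<forall>n. finite (\<omega> n) \<and> (\<forall>U\<in>\<omega> n. functionally_open X U) \<and> \<Union>(\<omega> n) = topspace X"
  show "\<exists>m \<gamma>. (\<forall>n<m. finite (\<gamma> n) \<and> (\<forall>V\<in>\<gamma> n. functionally_open X V) \<and>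
                 pairwise disjnt (\<gamma> n) \<and> refines (\<gamma> n) (\<omega> n)) \<and>
              topspace X \<subseteq> (\<Union>n<m. \<Union>(\<gamma> n))"
  proof (cases "topspace X = {}")
    case True
    then show ?thesis by (intro exI[of _ 0]) auto
  next
    case False
    obtain c U f where c_pos: "\<And>n. 1 \<le> c n" and U: "\<And>n. \<omega> n = U n ` {..<c n}"
      and f: "\<And>n. continuous_map X (top_of_set (cube 0 1 (c n))) (f n)"
      and f_sum: "\<And>n x. x \<in> topspace X \<Longrightarrow> (\<Sum>i<c n. f n x i) = 1"
      and f_supp: "\<And>n x i. \<lbrakk>x \<in> topspace X; i < c n; 0 < f n x i\<rbrakk> \<Longrightarrow> x \<in> U n i"
      by (elim functionally_open_covers_simplex_maps[OF \<omega> False])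
    define \<epsilon> where "\<epsilon> n = 1 / (real (c n) + 2)" for n
    have "\<And>n. 0 < \<epsilon> n" by (simp add: \<epsilon>_def)
    from removable[of c f, OF c_pos f, unfolded finitely_removable_def Euclidean_space_cube,
        rule_format, where \<epsilon> = \<epsilon>, OF this]
    obtain m g where
      g: "\<forall>n<m. continuous_map X (top_of_set (cube 0 1 (c n))) (g n) \<and>
                (\<forall>x\<in>topspace X. l1_norm (c n) (\<lambda>i. f n x i - g n x i) \<le> \<epsilon> n)"
      and g_off: "\<forall>x\<in>topspace X. \<exists>n<m. g n x \<notin> cube_tied_max (c n)"
      by (elim exE conjE)
    let ?W = "\<lambda>n. strict_max_set X (g n) (c n)"
    show ?thesis
    proof (intro exI[of _ m] exI[of _ "\<lambda>n. ?W n ` {..<c n}"], rule conjI[OF allI[OF impI]])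
      fix n assume "n < m"
      show "finite (?W n ` {..<c n}) \<and> (\<forall>V\<in>?W n ` {..<c n}. functionally_open X V) \<and>
          pairwise disjnt (?W n ` {..<c n}) \<and> refines (?W n ` {..<c n}) (\<omega> n)"
        unfolding U using g f_sum f_supp \<open>n < m\<close>
        by (intro strict_max_sets_refine[where F = "f n"]) (auto simp: \<epsilon>_def)
    next
      show "topspace X \<subseteq> (\<Union>n<m. \<Union>(?W n ` {..<c n}))"
        using g g_off by (intro strict_max_sets_cover) auto
    qed
  qed
qed

theorem corollary5p2:
  fixes X :: "'a topology"
  assumes "tychonoff_space X"
  shows "finite_C_space X \<longleftrightarrow>
    (\<forall>(a :: nat \<Rightarrow> real) (b :: nat \<Rightarrow> real) (k :: nat \<Rightarrow> nat)
       (N :: nat \<Rightarrow> (nat \<Rightarrow> real) \<Rightarrow> real) (A :: nat \<Rightarrow> (nat \<Rightarrow> real) set)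
       (f :: nat \<Rightarrow> 'a \<Rightarrow> nat \<Rightarrow> real).
       (\<forall>n. a n < b n \<and> 1 \<le> k n \<and> is_norm_on (k n) (N n) \<and>
            A n \<subseteq> cube (a n) (b n) (k n) \<and>
            closedin (subtopology (Euclidean_space (k n)) (cube (a n) (b n) (k n))) (A n) \<and>
            (subtopology (Euclidean_space (k n)) (cube (a n) (b n) (k n))) interior_of (A n) = {} \<and>
            continuous_map X (subtopology (Euclidean_space (k n)) (cube (a n) (b n) (k n))) (f n))
       \<longrightarrow> finitely_removable X (\<lambda>n. cube (a n) (b n) (k n)) k N A f)"
  apply (rule iffI)
  subgoal premises C_space
    using finitely_removable_if_finite_C_space[OF C_space] by (simp add: Euclidean_space_cube)
  subgoal premises removable
  proof (rule finite_C_space_if_tied_max_removable)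
    fix c :: "nat \<Rightarrow> nat" and f :: "nat \<Rightarrow> 'a \<Rightarrow> nat \<Rightarrow> real"
    assume "\<And>n. 1 \<le> c n" "\<And>n. continuous_map X (top_of_set (cube 0 1 (c n))) (f n)"
    then show "finitely_removable X (\<lambda>n. cube 0 1 (c n)) c (\<lambda>n. l1_norm (c n))
                 (\<lambda>n. cube_tied_max (c n)) f"
      using removable[rule_format, of "\<lambda>_. 0" "\<lambda>_. 1" c "\<lambda>n. l1_norm (c n)"
          "\<lambda>n. cube_tied_max (c n)" f]
      by (simp add: Euclidean_space_cube is_norm_on_l1_norm cube_tied_max_subset
          closedin_cube_tied_max cube_tied_max_interior_empty)
  qed
  done

end
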